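(* Let $\rho\in[-1,1]$ and $\kappa>(1+\rho)/\sqrt2$. Let $\bar Z\sim\mathcal N(0,1)$ and $\bar r$ be independent real random variables with $\bar r\ge0$, $\mathbb E[\bar r^2]<\infty$ and $\mathcal L(\bar r)\neq\delta_0$. Then the system $$\kappa=\delta+\rho\frac{\gamma}{\delta},\qquad \sigma^2=\frac1{\delta^2}\mathbb E\big[(\sigma\bar Z+\bar r)_+^2\big],\qquad \gamma=\mathbb P[\sigma\bar Z+\bar r>0]$$ admits a unique solution $(\delta,\sigma,\gamma)$ in $(1/\sqrt2,\infty)\times(0,\infty)\times(0,1)$.
   Context: $x_+=\max(x,0)$. *)

theory Defs
  imports "HOL-Probability.Probability"
begin

end

theory Submission
  imports Defs "HOL-Real_Asymp.Real_Asymp"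
begin

(* With u = 1 / \<sigma> and W\<^sub>u = Z + u r, the last two equations say \<delta>\<^sup>2 = E[(W\<^sub>u)\<^sub>+\<^sup>2] and
   \<gamma> = P[W\<^sub>u > 0], so the system has exactly one solution iff
   \<kappa>(u) = \<delta>(u) + \<rho> \<gamma>(u) / \<delta>(u) takes the value \<kappa> at exactly one u > 0.
   Gaussian integration by parts (Stein's identity) gives E[Z (W\<^sub>u)\<^sub>+] = \<gamma>(u), hence
   \<delta>(u)\<^sup>2 = \<gamma>(u) + u N(u) with N(u) = E[r (W\<^sub>u)\<^sub>+] > 0, while Cauchy-Schwarz gives
   \<gamma>(u) + v N(u) = E[W\<^sub>v (W\<^sub>u)\<^sub>+] \<le> \<delta>(u) \<delta>(v). Together with the monotonicity of \<gamma>
   these relations force \<kappa> to be strictly increasing on [0, \<infinity>); as \<kappa>(0) = (1 + \<rho>) / \<surd>2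
   and \<kappa>(u) \<rightarrow> \<infinity>, the intermediate value theorem gives the unique root. *)

section \<open>Gaussian integrals\<close>

lemma std_normal_density_has_real_derivative:
  "(std_normal_density has_real_derivative - x * std_normal_density x) (at x)"
proof -
  have "((\<lambda>x. exp (- x\<^sup>2 / 2)) has_real_derivative - x * exp (- x\<^sup>2 / 2)) (at x)"
    by (auto intro!: derivative_eq_intros)
  from DERIV_cmult[OF this, of "1 / sqrt (2 * pi)"] show ?thesis
    unfolding std_normal_density_def[abs_def] by (simp only: mult.left_commute)
qed

lemma integrable_std_normal_quadratic:
  "integrable lborel (\<lambda>z. std_normal_density z * (a * z\<^sup>2 + b * z + c))"
proof -
  have "integrable lborel (\<lambda>z. a * (std_normal_density z * z ^ 2) + b * (std_normal_density z * z ^ 1)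
          + c * std_normal_density z)"
    by (intro Bochner_Integration.integrable_add integrable_mult_right integrable_std_normal_moment)
      simp
  then show ?thesis by (simp add: algebra_simps)
qed

lemma std_normal_half_line_integral_zero:
  "(LBINT z=ereal (-c)..\<infinity>. std_normal_density z * (z\<^sup>2 + c * z - 1)) = 0"
proof -
  let ?F = "\<lambda>z::real. - (z + c) * std_normal_density z"
  have cont: "isCont ?F z" for z
    unfolding std_normal_density_def by (intro continuous_intros) auto
  have "(LBINT z=ereal (-c)..\<infinity>. std_normal_density z * (z\<^sup>2 + c * z - 1)) = 0 - ?F (-c)"
  proof (rule interval_integral_FTC_integrable)
    show "(?F has_vector_derivative std_normal_density z * (z\<^sup>2 + c * z - 1)) (at z)" for z
      unfolding has_real_derivative_iff_has_vector_derivative[symmetric]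
      by (auto intro!: derivative_eq_intros std_normal_density_has_real_derivative
          simp: algebra_simps power2_eq_square)
    show "isCont (\<lambda>z. std_normal_density z * (z\<^sup>2 + c * z - 1)) z" for z
      unfolding std_normal_density_def by (intro continuous_intros) auto
    show "set_integrable lborel (einterval (ereal (-c)) \<infinity>)
            (\<lambda>z. std_normal_density z * (z\<^sup>2 + c * z - 1))"
      using integrable_std_normal_quadratic[of 1 c "-1"]
      unfolding set_integrable_def by (intro integrable_mult_indicator) auto
    show "((?F \<circ> real_of_ereal) \<longlongrightarrow> ?F (-c)) (at_right (ereal (-c)))"
      using cont[of "-c"] unfolding ereal_tendsto_simps1 isCont_def
      by (auto intro: tendsto_mono[OF at_le])
    have "(?F \<longlongrightarrow> 0) at_top"
      unfolding std_normal_density_def by real_asymp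
    then show "((?F \<circ> real_of_ereal) \<longlongrightarrow> 0) (at_left \<infinity>)"
      unfolding ereal_tendsto_simps1 .
  qed simp
  then show ?thesis by simp
qed

lemma std_normal_stein_pos_part:
  "(\<integral>z. std_normal_density z * (z * max (z + c) 0) \<partial>lborel) =
   (\<integral>z. std_normal_density z * indicator {0<..} (z + c) \<partial>lborel)"
proof -
  let ?I = "indicator {-c<..} :: real \<Rightarrow> real"
  have int_quadratic: "integrable lborel (\<lambda>z. std_normal_density z * (1 * z\<^sup>2 + c * z + 0) * ?I z)"
    by (intro integrable_real_mult_indicator integrable_std_normal_quadratic) auto
  have int_density: "integrable lborel (\<lambda>z. std_normal_density z * ?I z)"
    by (intro integrable_real_mult_indicator) auto
  have "(\<integral>z. std_normal_density z * (z\<^sup>2 + c * z - 1) * ?I z \<partial>lborel) = 0"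
    using std_normal_half_line_integral_zero[of c]
    by (simp add: interval_lebesgue_integral_def set_lebesgue_integral_def einterval_def
        greaterThan_def mult.commute)
  moreover have "(\<lambda>z. std_normal_density z * (z\<^sup>2 + c * z - 1) * ?I z) =
      (\<lambda>z. std_normal_density z * (1 * z\<^sup>2 + c * z + 0) * ?I z - std_normal_density z * ?I z)"
    by (simp add: algebra_simps)
  moreover have "(\<lambda>z. std_normal_density z * (z * max (z + c) 0)) =
      (\<lambda>z. std_normal_density z * (1 * z\<^sup>2 + c * z + 0) * ?I z)"
    by (auto simp: algebra_simps power2_eq_square max_def split: split_indicator)
  moreover have "(\<lambda>z. std_normal_density z * indicator {0<..} (z + c)) = (\<lambda>z. std_normal_density z * ?I z)"
    by (auto split: split_indicator)
  ultimately show ?thesis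
    using int_quadratic int_density by simp
qed

lemma std_normal_upper_half: "(\<integral>z. std_normal_density z * indicator {0<..} z \<partial>lborel) = 1 / 2"
proof -
  have symmetric: "(\<integral>z. std_normal_density z * indicator {0<..} z \<partial>lborel) =
      (\<integral>z. std_normal_density z * indicator {..<0} z \<partial>lborel)"
    by (subst lborel_integral_real_affine[where c="-1" and t=0])
       (auto intro!: Bochner_Integration.integral_cong simp: std_normal_density_def split: split_indicator)
  have "(\<integral>z. std_normal_density z * indicator {0<..} z \<partial>lborel)
      + (\<integral>z. std_normal_density z * indicator {..<0} z \<partial>lborel)
      = (\<integral>z. std_normal_density z * indicator {0<..} z + std_normal_density z * indicator {..<0} z \<partial>lborel)"
    by (intro Bochner_Integration.integral_add[symmetric] integrable_real_mult_indicator) auto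
  also have "\<dots> = (\<integral>z. std_normal_density z \<partial>lborel)"
    by (intro integral_cong_AE)
       (auto intro!: eventually_mono[OF AE_lborel_singleton[of 0]] split: split_indicator)
  finally show ?thesis using symmetric by simp
qed

lemma std_normal_lower_tail_pos: "0 < (\<integral>z. std_normal_density z * indicator {..0} (z + c) \<partial>lborel)"
proof -
  define m where "m = std_normal_density (\<bar>c\<bar> + 1)"
  have "0 < m" by (simp add: m_def normal_density_pos)
  have below: "m * indicator {-c-1..-c} z \<le> std_normal_density z * indicator {..0} (z + c)" for z
  proof (cases "z \<in> {-c-1..-c}")
    case True
    then have "z\<^sup>2 \<le> (\<bar>c\<bar> + 1)\<^sup>2"
      by (auto simp: abs_le_iff power2_le_iff_abs_le)
    then have "m \<le> std_normal_density z"
      unfolding m_def std_normal_density_def by (intro mult_left_mono) auto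
    then show ?thesis using True by (auto split: split_indicator)
  qed simp
  have "m = (\<integral>z. m * indicator {-c-1..-c} z \<partial>lborel)" by simp
  also have "\<dots> \<le> (\<integral>z. std_normal_density z * indicator {..0} (z + c) \<partial>lborel)"
  proof (rule integral_mono[OF _ _ below])
    have "(\<lambda>z. std_normal_density z * indicator {..0} (z + c)) = (\<lambda>z. std_normal_density z * indicator {..-c} z)"
      by (auto split: split_indicator)
    then show "integrable lborel (\<lambda>z. std_normal_density z * indicator {..0} (z + c))"
      by (auto intro: integrable_real_mult_indicator)
  qed (auto intro: integrable_real_indicator)
  finally show ?thesis using \<open>0 < m\<close> by linarith
qed

lemma sum_abs_sq_le: "(\<bar>a\<bar> + \<bar>b\<bar>)\<^sup>2 \<le> 2 * (a\<^sup>2 + b\<^sup>2)" for a b :: real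
proof -
  have "0 \<le> (\<bar>a\<bar> - \<bar>b\<bar>)\<^sup>2" by simp
  then show ?thesis by (simp add: power2_eq_square algebra_simps)
qed

lemma abs_pos_part_affine_le: "\<bar>max (a + u * b) 0\<bar> \<le> (1 + \<bar>u\<bar>) * (\<bar>a\<bar> + \<bar>b\<bar>)"
  for a b u :: real
proof -
  have "\<bar>max (a + u * b) 0\<bar> \<le> \<bar>a + u * b\<bar>" by (simp add: max_def)
  also have "\<dots> \<le> \<bar>a\<bar> + \<bar>u\<bar> * \<bar>b\<bar>"
    using abs_triangle_ineq[of a "u * b"] by (simp add: abs_mult)
  also have "\<dots> \<le> (1 + \<bar>u\<bar>) * (\<bar>a\<bar> + \<bar>b\<bar>)"
    by (simp add: algebra_simps)
  finally show ?thesis .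
qed

lemma abs_mult_pos_part_affine_le:
  fixes a b c u :: real
  assumes c: "\<bar>c\<bar> \<le> (1 + \<bar>u\<bar>) * (\<bar>a\<bar> + \<bar>b\<bar>)"
  shows "\<bar>c * max (a + u * b) 0\<bar> \<le> 2 * (1 + \<bar>u\<bar>)\<^sup>2 * (a\<^sup>2 + b\<^sup>2)"
proof -
  have "\<bar>c * max (a + u * b) 0\<bar> \<le> ((1 + \<bar>u\<bar>) * (\<bar>a\<bar> + \<bar>b\<bar>))\<^sup>2"
    unfolding abs_mult power2_eq_square using c abs_pos_part_affine_le[of a u b]
    by (intro mult_mono) auto
  also have "\<dots> = (1 + \<bar>u\<bar>)\<^sup>2 * (\<bar>a\<bar> + \<bar>b\<bar>)\<^sup>2"
    by (rule power_mult_distrib)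
  also have "\<dots> \<le> (1 + \<bar>u\<bar>)\<^sup>2 * (2 * (a\<^sup>2 + b\<^sup>2))"
    by (intro mult_left_mono sum_abs_sq_le) simp
  finally show ?thesis by (simp only: mult.left_commute)
qed

lemma mult_le_half_weighted_squares:
  fixes x y a b :: real
  assumes "0 < a" "0 < b"
  shows "x * y \<le> b / (2 * a) * x\<^sup>2 + a / (2 * b) * y\<^sup>2"
proof -
  have "0 \<le> (b * x - a * y)\<^sup>2" by simp
  then have "2 * a * b * (x * y) \<le> b\<^sup>2 * x\<^sup>2 + a\<^sup>2 * y\<^sup>2"
    by (simp add: power2_eq_square algebra_simps)
  then show ?thesis using assms by (simp add: field_simps power2_eq_square)
qed

lemma add_divide_less_add_divide:
  fixes c d e :: real
  assumes "0 < d" "d < e" "c < d * e"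
  shows "d + c / d < e + c / e"
proof -
  have "(e - d) * c < (e - d) * (d * e)"
    using assms by (intro mult_strict_left_mono) auto
  then show ?thesis using assms by (simp add: field_simps)
qed

(* Used with d, e the values of \<delta> at u < v, h, k those of \<gamma> and m, n those of N;
   the two cross bounds are the Cauchy-Schwarz inequalities of the header. *)
lemma add_ratio_less_of_cross_bounds:
  fixes d e h k m n u v \<rho> :: real
  assumes "0 < d" "0 < e"
    and d_sq: "d\<^sup>2 = h + u * m" and e_sq: "e\<^sup>2 = k + v * n"
    and cross_dv: "h + v * m \<le> e * d" and cross_eu: "k + u * n \<le> d * e"
    and "0 \<le> h" "h \<le> k" "0 < m" "0 \<le> u" "u < v"
    and "-1 \<le> \<rho>" "\<rho> \<le> 1"
  shows "d + \<rho> * h / d < e + \<rho> * k / e"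
proof -
  have "u * m < v * m" using \<open>0 < m\<close> \<open>u < v\<close> by simp
  then have "d * d < e * d"
    using d_sq cross_dv by (simp add: power2_eq_square)
  then have "d < e" using \<open>0 < d\<close> by simp
  show ?thesis
  proof (cases "0 \<le> \<rho>")
    case True
    have "\<rho> * h \<le> h"
      using \<open>0 \<le> h\<close> True \<open>\<rho> \<le> 1\<close> by (rule mult_left_le_one_le)
    also have "\<dots> \<le> d * d"
      using d_sq \<open>0 < m\<close> \<open>0 \<le> u\<close> by (simp add: power2_eq_square)
    also have "\<dots> < d * e" using \<open>d < e\<close> \<open>0 < d\<close> by simp
    finally have "d + \<rho> * h / d < e + \<rho> * h / e"
      using \<open>0 < d\<close> \<open>d < e\<close> by (intro add_divide_less_add_divide)
    moreover have "\<rho> * h / e \<le> \<rho> * k / e"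
      using True \<open>h \<le> k\<close> \<open>0 < e\<close> by (intro divide_right_mono mult_left_mono) auto
    ultimately show ?thesis by linarith
  next
    case False
    define \<beta>\<^sub>d \<beta>\<^sub>e where "\<beta>\<^sub>d = m / d" and "\<beta>\<^sub>e = n / e"
    have h_d: "h / d = d - u * \<beta>\<^sub>d" and k_e: "k / e = e - v * \<beta>\<^sub>e"
      using d_sq e_sq \<open>0 < d\<close> \<open>0 < e\<close> by (simp_all add: \<beta>\<^sub>d_def \<beta>\<^sub>e_def field_simps power2_eq_square)
    have "h / d + v * \<beta>\<^sub>d \<le> e" and "k / e + u * \<beta>\<^sub>e \<le> d"
      using cross_dv cross_eu \<open>0 < d\<close> \<open>0 < e\<close>
      by (simp_all add: \<beta>\<^sub>d_def \<beta>\<^sub>e_def field_simps mult.commute)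
    then have "(v - u) * \<beta>\<^sub>d \<le> (v - u) * \<beta>\<^sub>e"
      using h_d k_e by (simp add: algebra_simps)
    then have "\<beta>\<^sub>d \<le> \<beta>\<^sub>e" using \<open>u < v\<close> by simp
    moreover have "0 < \<beta>\<^sub>d" using \<open>0 < m\<close> \<open>0 < d\<close> by (simp add: \<beta>\<^sub>d_def)
    ultimately have "u * \<beta>\<^sub>d < v * \<beta>\<^sub>e"
      using mult_left_mono[of "\<beta>\<^sub>d" "\<beta>\<^sub>e" u] mult_strict_right_mono[of u v "\<beta>\<^sub>e"] \<open>0 \<le> u\<close> \<open>u < v\<close>
      by linarith
    then have "- \<rho> * (u * \<beta>\<^sub>d) < - \<rho> * (v * \<beta>\<^sub>e)"
      using False by (intro mult_strict_left_mono) auto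
    moreover have "(1 + \<rho>) * d \<le> (1 + \<rho>) * e"
      using \<open>-1 \<le> \<rho>\<close> \<open>d < e\<close> by (intro mult_left_mono) auto
    ultimately show ?thesis
      unfolding times_divide_eq_right[symmetric] h_d k_e by (simp add: algebra_simps)
  qed
qed

lemma continuous_on_integral_dominated:
  fixes F :: "real \<Rightarrow> 'a \<Rightarrow> real"
  assumes "\<And>t. F t \<in> borel_measurable M"
    and "\<And>x. continuous_on {a..b} (\<lambda>t. F t x)"
    and "\<And>t x. t \<in> {a..b} \<Longrightarrow> \<bar>F t x\<bar> \<le> w x" and "integrable M w"
  shows "continuous_on {a..b} (\<lambda>t. \<integral>x. F t x \<partial>M)"
proof (rule continuous_on_sequentiallyI)
  fix t l assume t: "\<forall>n. t n \<in> {a..b}" and l: "l \<in> {a..b}" and "t \<longlonglongrightarrow> l"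
  show "(\<lambda>n. \<integral>x. F (t n) x \<partial>M) \<longlonglongrightarrow> (\<integral>x. F l x \<partial>M)"
  proof (rule integral_dominated_convergence[where w=w])
    show "AE x in M. (\<lambda>n. F (t n) x) \<longlonglongrightarrow> F l x"
      using assms(2) t l \<open>t \<longlonglongrightarrow> l\<close> unfolding continuous_on_sequentially comp_def by blast
  qed (use assms t in auto)
qed

lemma (in prob_space) prob_eq_expectation_indicator:
  assumes [measurable]: "f \<in> borel_measurable M" and "A \<in> sets borel"
  shows "prob {x \<in> space M. f x \<in> A} = expectation (\<lambda>x. indicator A (f x))"
proof -
  have "expectation (\<lambda>x. indicator A (f x)) = expectation (indicator {x \<in> space M. f x \<in> A})"
    by (intro Bochner_Integration.integral_cong) (auto split: split_indicator)
  also have "\<dots> = prob {x \<in> space M. f x \<in> A}"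
    using assms by simp
  finally show ?thesis ..
qed

section \<open>The family \<open>W\<^sub>u = Z + u r\<close>\<close>

locale std_normal_indep_shift = prob_space M for M :: "'a measure" +
  fixes Z r :: "'a \<Rightarrow> real"
  assumes Z_distributed: "distributed M lborel Z (\<lambda>x. ennreal (std_normal_density x))"
    and r_measurable[measurable]: "r \<in> borel_measurable M"
    and indep_Z_r: "indep_var borel Z borel r"
    and r_nonneg: "AE x in M. r x \<ge> 0"
    and r_square_integrable: "integrable M (\<lambda>x. (r x)\<^sup>2)"
    and r_not_zero: "distr M borel r \<noteq> return borel 0"
begin

definition W :: "real \<Rightarrow> 'a \<Rightarrow> real" where "W u x = Z x + u * r x"

definition pos_prob :: "real \<Rightarrow> real" where
  "pos_prob u = prob {x \<in> space M. W u x > 0}"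

definition pos_sq_moment :: "real \<Rightarrow> real" where
  "pos_sq_moment u = expectation (\<lambda>x. (max (W u x) 0)\<^sup>2)"

definition cross_moment :: "real \<Rightarrow> real" where
  "cross_moment u = expectation (\<lambda>x. r x * max (W u x) 0)"

definition delta_of :: "real \<Rightarrow> real" where "delta_of u = sqrt (pos_sq_moment u)"

definition kappa_of :: "real \<Rightarrow> real \<Rightarrow> real" where
  "kappa_of \<rho> u = delta_of u + \<rho> * pos_prob u / delta_of u"

lemma Z_measurable[measurable]: "Z \<in> borel_measurable M"
  using distributed_measurable[OF Z_distributed] by simp

lemma W_measurable[measurable]: "W u \<in> borel_measurable M"
  unfolding W_def by measurable

lemma Z_square_integrable: "integrable M (\<lambda>x. (Z x)\<^sup>2)"
  using distributed_integrable[OF Z_distributed, of "\<lambda>z. z\<^sup>2"] integrable_std_normal_moment[of 2]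
  by simp

lemma integrable_r: "integrable M r"
  using square_integrable_imp_integrable[OF r_measurable r_square_integrable] .

lemma integrable_mult_pos_W:
  assumes [measurable]: "c \<in> borel_measurable M"
    and c: "\<And>x. \<bar>c x\<bar> \<le> (1 + \<bar>u\<bar>) * (\<bar>Z x\<bar> + \<bar>r x\<bar>)"
  shows "integrable M (\<lambda>x. c x * max (W u x) 0)"
proof (rule Bochner_Integration.integrable_bound)
  show "integrable M (\<lambda>x. 2 * (1 + \<bar>u\<bar>)\<^sup>2 * ((Z x)\<^sup>2 + (r x)\<^sup>2))"
    using Z_square_integrable r_square_integrable by simp
  show "AE x in M. norm (c x * max (W u x) 0) \<le> norm (2 * (1 + \<bar>u\<bar>)\<^sup>2 * ((Z x)\<^sup>2 + (r x)\<^sup>2))"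
    using abs_mult_pos_part_affine_le[OF c] by (simp add: W_def)
qed simp

lemma integrable_Z_mult_pos_W: "integrable M (\<lambda>x. Z x * max (W u x) 0)"
  by (rule integrable_mult_pos_W) (auto simp: algebra_simps)

lemma integrable_r_mult_pos_W: "integrable M (\<lambda>x. r x * max (W u x) 0)"
  by (rule integrable_mult_pos_W) (auto simp: algebra_simps)

lemma integrable_pos_W_sq: "integrable M (\<lambda>x. (max (W u x) 0)\<^sup>2)"
  using integrable_mult_pos_W[of "\<lambda>x. max (W u x) 0" u] abs_pos_part_affine_le
  by (simp add: W_def power2_eq_square)

lemma integrable_Z_pos_part: "integrable M (\<lambda>x. max (Z x) 0)"
proof (rule square_integrable_imp_integrable)
  show "integrable M (\<lambda>x. (max (Z x) 0)\<^sup>2)"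
    using integrable_pos_W_sq[of 0] by (simp add: W_def)
qed measurable

lemma expectation_eq_iterated:
  fixes f :: "real \<Rightarrow> real \<Rightarrow> real"
  assumes f[measurable]: "case_prod f \<in> borel_measurable (borel \<Otimes>\<^sub>M borel)"
    and integrable_f: "integrable M (\<lambda>x. f (Z x) (r x))"
  shows "integrable (distr M borel r) (\<lambda>s. \<integral>z. std_normal_density z * f z s \<partial>lborel)"
    and "expectation (\<lambda>x. f (Z x) (r x)) =
      (\<integral>s. (\<integral>z. std_normal_density z * f z s \<partial>lborel) \<partial>distr M borel r)"
proof -
  let ?N = "density lborel (\<lambda>x. ennreal (std_normal_density x))"
  interpret N: prob_space ?N using prob_space_normal_density by simp
  interpret R: prob_space "distr M borel r" by (rule prob_space_distr) simp
  interpret pair_sigma_finite ?N "distr M borel r" ..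
  have "distr M borel Z = distr M lborel Z" by (rule distr_cong) auto
  then have law_Z: "distr M borel Z = ?N"
    using distributed_distr_eq_density[OF Z_distributed] by simp
  have joint_law: "distr M (borel \<Otimes>\<^sub>M borel) (\<lambda>x. (Z x, r x)) = ?N \<Otimes>\<^sub>M distr M borel r"
    using indep_Z_r unfolding indep_var_distribution_eq law_Z by simp
  have pair[measurable]: "(\<lambda>x. (Z x, r x)) \<in> measurable M (borel \<Otimes>\<^sub>M borel)" by measurable
  have integrable_pair: "integrable (?N \<Otimes>\<^sub>M distr M borel r) (case_prod f)"
    unfolding joint_law[symmetric] using integrable_f by (simp add: integrable_distr_eq[OF pair])
  have inner: "(\<integral>z. f z s \<partial>?N) = (\<integral>z. std_normal_density z * f z s \<partial>lborel)" for s
  proof -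
    have "(\<lambda>z. (z, s)) \<in> measurable borel (borel \<Otimes>\<^sub>M borel)" by measurable
    from measurable_compose[OF this f] show ?thesis
      by (simp add: integral_density)
  qed
  show "integrable (distr M borel r) (\<lambda>s. \<integral>z. std_normal_density z * f z s \<partial>lborel)"
    using integrable_snd[OF integrable_pair] by (simp add: inner)
  have "expectation (\<lambda>x. f (Z x) (r x)) = (\<integral>p. case_prod f p \<partial>(?N \<Otimes>\<^sub>M distr M borel r))"
    unfolding joint_law[symmetric] by (simp add: integral_distr[OF pair])
  also have "\<dots> = (\<integral>s. (\<integral>z. f z s \<partial>?N) \<partial>distr M borel r)"
    using integral_snd[OF integrable_pair] by simp
  finally show "expectation (\<lambda>x. f (Z x) (r x)) =
      (\<integral>s. (\<integral>z. std_normal_density z * f z s \<partial>lborel) \<partial>distr M borel r)"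
    by (simp add: inner)
qed

lemma expectation_Z_mult_pos_W: "expectation (\<lambda>x. Z x * max (W u x) 0) = pos_prob u"
proof -
  have "expectation (\<lambda>x. Z x * max (W u x) 0) =
      (\<integral>s. (\<integral>z. std_normal_density z * (z * max (z + u * s) 0) \<partial>lborel) \<partial>distr M borel r)"
    using expectation_eq_iterated(2)[of "\<lambda>z s. z * max (z + u * s) 0"] integrable_Z_mult_pos_W
    by (simp add: W_def)
  also have "\<dots> = (\<integral>s. (\<integral>z. std_normal_density z * indicator {0<..} (z + u * s) \<partial>lborel) \<partial>distr M borel r)"
    by (intro Bochner_Integration.integral_cong refl std_normal_stein_pos_part)
  also have "\<dots> = expectation (\<lambda>x. indicator {0<..} (W u x))"
  proof (rule expectation_eq_iterated(2)[symmetric, of "\<lambda>z s. indicator {0<..} (z + u * s)",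
        unfolded W_def[symmetric]])
    show "integrable M (\<lambda>x. indicator {0<..} (W u x) :: real)"
      by (intro integrable_const_bound[where B=1]) (auto split: split_indicator)
  qed measurable
  also have "\<dots> = pos_prob u"
    unfolding pos_prob_def greaterThan_iff[symmetric]
    by (rule prob_eq_expectation_indicator[symmetric]) auto
  finally show ?thesis .
qed

lemma pos_sq_moment_eq: "pos_sq_moment u = pos_prob u + u * cross_moment u"
proof -
  have "pos_sq_moment u = expectation (\<lambda>x. Z x * max (W u x) 0 + u * (r x * max (W u x) 0))"
    unfolding pos_sq_moment_def
    by (intro Bochner_Integration.integral_cong) (auto simp: W_def max_def power2_eq_square algebra_simps)
  also have "\<dots> = pos_prob u + u * cross_moment u"
    using integrable_Z_mult_pos_W integrable_r_mult_pos_W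
    by (simp add: expectation_Z_mult_pos_W cross_moment_def)
  finally show ?thesis .
qed

lemma pos_prob_0: "pos_prob 0 = 1 / 2"
proof -
  have "pos_prob 0 = prob {x \<in> space M. Z x \<in> {0<..}}"
    unfolding pos_prob_def W_def by simp
  also have "\<dots> = expectation (\<lambda>x. indicator {0<..} (Z x))"
    by (rule prob_eq_expectation_indicator) auto
  also have "\<dots> = (\<integral>z. std_normal_density z * indicator {0<..} z \<partial>lborel)"
    by (rule distributed_integral[OF Z_distributed, symmetric]) auto
  finally show ?thesis by (simp add: std_normal_upper_half)
qed

lemma pos_sq_moment_0: "pos_sq_moment 0 = 1 / 2"
  using pos_sq_moment_eq[of 0] pos_prob_0 by simp

lemma pos_prob_less_1: "pos_prob u < 1"
proof -
  interpret R: prob_space "distr M borel r" by (rule prob_space_distr) simp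
  have integrable_indicator: "integrable M (\<lambda>x. indicator {..0} (W u x) :: real)"
    by (intro integrable_const_bound[where B=1]) (auto split: split_indicator)
  have "(\<lambda>(z, s). indicator {..0} (z + u * s) :: real) \<in> borel_measurable (borel \<Otimes>\<^sub>M borel)"
    by measurable
  note iterated = expectation_eq_iterated[OF this, unfolded W_def[symmetric], OF integrable_indicator]
  have "0 = (\<integral>s. 0 \<partial>distr M borel r)" by simp
  also have "\<dots> < (\<integral>s. (\<integral>z. std_normal_density z * indicator {..0} (z + u * s) \<partial>lborel) \<partial>distr M borel r)"
    using iterated(1) std_normal_lower_tail_pos R.emeasure_space_1
    by (intro R.integral_less_AE_space) auto
  also have "\<dots> = prob {x \<in> space M. W u x \<le> 0}"
    unfolding iterated(2)[symmetric] atMost_iff[symmetric]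
    by (rule prob_eq_expectation_indicator[symmetric]) auto
  finally have "0 < prob {x \<in> space M. W u x \<le> 0}" .
  moreover have "{x \<in> space M. W u x > 0} = space M - {x \<in> space M. W u x \<le> 0}" by auto
  ultimately show ?thesis
    unfolding pos_prob_def by (simp add: prob_compl)
qed

lemma expectation_r_pos: "0 < expectation r"
proof (rule ccontr)
  assume "\<not> 0 < expectation r"
  moreover have "0 \<le> expectation r" using r_nonneg by (rule integral_nonneg_AE)
  ultimately have "AE x in M. r x = 0"
    using integral_nonneg_eq_0_iff_AE[OF integrable_r r_nonneg] by simp
  then have "distr M borel r = distr M borel (\<lambda>_. 0)"
    by (intro distr_cong_AE) auto
  with r_not_zero show False by simp
qed

lemma expectation_Z_pos_part_pos: "0 < expectation (\<lambda>x. max (Z x) 0)"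
proof (rule ccontr)
  assume "\<not> 0 < expectation (\<lambda>x. max (Z x) 0)"
  moreover have "0 \<le> expectation (\<lambda>x. max (Z x) 0)"
    by (rule Bochner_Integration.integral_nonneg) simp
  ultimately have "AE x in M. max (Z x) 0 = 0"
    using integral_nonneg_eq_0_iff_AE[OF integrable_Z_pos_part] by simp
  then have "AE x in M. (max (W 0 x) 0)\<^sup>2 = 0"
    by eventually_elim (simp add: W_def)
  then have "pos_sq_moment 0 = 0"
    unfolding pos_sq_moment_def by (rule integral_eq_zero_AE)
  with pos_sq_moment_0 show False by simp
qed

lemma cross_moment_0_pos: "0 < cross_moment 0"
proof -
  have indep: "indep_var borel (\<lambda>x. max (Z x) 0) borel r"
    using indep_var_compose[OF indep_Z_r, of "\<lambda>z. max z 0" borel id borel] by (simp add: comp_def)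
  have "cross_moment 0 = expectation (\<lambda>x. max (Z x) 0 * r x)"
    unfolding cross_moment_def W_def by (simp add: mult.commute)
  also have "\<dots> = expectation (\<lambda>x. max (Z x) 0) * expectation r"
    by (rule indep_var_lebesgue_integral[OF indep integrable_Z_pos_part integrable_r])
  finally show ?thesis using expectation_Z_pos_part_pos expectation_r_pos by simp
qed

lemma W_mono:
  assumes "u \<le> v" "0 \<le> r x"
  shows "W u x \<le> W v x"
  using mult_right_mono[OF assms] by (simp add: W_def)

lemma pos_prob_mono:
  assumes "u \<le> v"
  shows "pos_prob u \<le> pos_prob v"
  unfolding pos_prob_def
proof (rule finite_measure_mono_AE)
  show "AE x in M. x \<in> {x \<in> space M. 0 < W u x} \<longrightarrow> x \<in> {x \<in> space M. 0 < W v x}"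
    using r_nonneg
  proof eventually_elim
    case (elim x)
    then show ?case using W_mono[OF assms elim] by auto
  qed
qed measurable

lemma cross_moment_mono:
  assumes "u \<le> v"
  shows "cross_moment u \<le> cross_moment v"
  unfolding cross_moment_def
proof (rule integral_mono_AE[OF integrable_r_mult_pos_W integrable_r_mult_pos_W])
  show "AE x in M. r x * max (W u x) 0 \<le> r x * max (W v x) 0"
    using r_nonneg
  proof eventually_elim
    case (elim x)
    then have "max (W u x) 0 \<le> max (W v x) 0" using W_mono[OF assms elim] by (simp add: max_def)
    then show ?case using elim by (rule mult_left_mono)
  qed
qed

lemma pos_sq_moment_ge:
  assumes "0 \<le> u"
  shows "1 / 2 + u * cross_moment 0 \<le> pos_sq_moment u"
  using pos_sq_moment_eq[of u] pos_prob_mono[OF assms] cross_moment_mono[OF assms] assms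
  by (simp add: pos_prob_0 add_mono mult_left_mono)

lemma pos_sq_moment_pos:
  assumes "0 \<le> u"
  shows "0 < pos_sq_moment u"
proof -
  have "0 \<le> u * cross_moment 0" using assms cross_moment_0_pos by simp
  then show ?thesis using pos_sq_moment_ge[OF assms] by linarith
qed

lemma delta_of_pos: "0 \<le> u \<Longrightarrow> 0 < delta_of u"
  unfolding delta_of_def using pos_sq_moment_pos by simp

lemma delta_of_sq: "0 \<le> u \<Longrightarrow> (delta_of u)\<^sup>2 = pos_sq_moment u"
  unfolding delta_of_def using pos_sq_moment_pos[of u] by simp

lemma delta_of_0: "delta_of 0 = 1 / sqrt 2"
  unfolding delta_of_def pos_sq_moment_0 by (simp add: real_sqrt_divide)

lemma delta_of_gt:
  assumes "0 < u"
  shows "1 / sqrt 2 < delta_of u"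
proof -
  have "0 < u * cross_moment 0" using assms cross_moment_0_pos by simp
  then have "1 / 2 < pos_sq_moment u" using pos_sq_moment_ge[of u] assms by linarith
  then have "sqrt (1 / 2) < delta_of u" unfolding delta_of_def by (rule real_sqrt_less_mono)
  then show ?thesis by (simp add: real_sqrt_divide)
qed

(* Cauchy-Schwarz, via the pointwise AM-GM inequality with weights matched to \<delta>(u) and \<delta>(v). *)
lemma pos_prob_add_cross_moment_le:
  assumes "0 \<le> u" "0 \<le> v"
  shows "pos_prob u + v * cross_moment u \<le> delta_of v * delta_of u"
proof -
  define a b where "a = delta_of v" and "b = delta_of u"
  have "0 < a" "0 < b" using delta_of_pos assms by (auto simp: a_def b_def)
  have "pos_prob u + v * cross_moment u = expectation (\<lambda>x. W v x * max (W u x) 0)"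
    using integrable_Z_mult_pos_W integrable_r_mult_pos_W
    by (simp add: expectation_Z_mult_pos_W[symmetric] cross_moment_def W_def algebra_simps)
  also have "\<dots> \<le> expectation (\<lambda>x. b / (2 * a) * (max (W v x) 0)\<^sup>2 + a / (2 * b) * (max (W u x) 0)\<^sup>2)"
  proof (rule integral_mono)
    show "integrable M (\<lambda>x. W v x * max (W u x) 0)"
      using integrable_Z_mult_pos_W integrable_r_mult_pos_W by (simp add: W_def algebra_simps)
    show "integrable M (\<lambda>x. b / (2 * a) * (max (W v x) 0)\<^sup>2 + a / (2 * b) * (max (W u x) 0)\<^sup>2)"
      using integrable_pos_W_sq by simp
    fix x
    have "W v x * max (W u x) 0 \<le> max (W v x) 0 * max (W u x) 0"
      by (intro mult_right_mono) auto
    also have "\<dots> \<le> b / (2 * a) * (max (W v x) 0)\<^sup>2 + a / (2 * b) * (max (W u x) 0)\<^sup>2"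
      using \<open>0 < a\<close> \<open>0 < b\<close> by (rule mult_le_half_weighted_squares)
    finally show "W v x * max (W u x) 0 \<le> b / (2 * a) * (max (W v x) 0)\<^sup>2 + a / (2 * b) * (max (W u x) 0)\<^sup>2" .
  qed
  also have "\<dots> = b / (2 * a) * a\<^sup>2 + a / (2 * b) * b\<^sup>2"
    using integrable_pos_W_sq assms
    by (simp add: a_def b_def delta_of_sq pos_sq_moment_def)
  also have "\<dots> = a * b"
    using \<open>0 < a\<close> \<open>0 < b\<close> by (simp add: field_simps power2_eq_square)
  finally show ?thesis by (simp add: a_def b_def)
qed

lemma kappa_of_strict_mono:
  assumes "0 \<le> u" "u < v" "-1 \<le> \<rho>" "\<rho> \<le> 1"
  shows "kappa_of \<rho> u < kappa_of \<rho> v"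
  unfolding kappa_of_def
proof (rule add_ratio_less_of_cross_bounds)
  have "0 \<le> v" using assms by simp
  show "0 < delta_of u" "0 < delta_of v"
    using delta_of_pos assms \<open>0 \<le> v\<close> by auto
  show "(delta_of u)\<^sup>2 = pos_prob u + u * cross_moment u" "(delta_of v)\<^sup>2 = pos_prob v + v * cross_moment v"
    using delta_of_sq pos_sq_moment_eq assms \<open>0 \<le> v\<close> by auto
  show "pos_prob u + v * cross_moment u \<le> delta_of v * delta_of u"
    "pos_prob v + u * cross_moment v \<le> delta_of u * delta_of v"
    using pos_prob_add_cross_moment_le assms \<open>0 \<le> v\<close> by auto
  show "0 \<le> pos_prob u" by (simp add: pos_prob_def)
  show "pos_prob u \<le> pos_prob v" "0 < cross_moment u"
    using pos_prob_mono cross_moment_mono[of 0 u] cross_moment_0_pos assms by auto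
qed (use assms in auto)

lemma continuous_on_expectation_mult_pos_W:
  assumes [measurable]: "\<And>t. c t \<in> borel_measurable M"
    and "\<And>x. continuous_on {0..b} (\<lambda>t. c t x)"
    and c: "\<And>t x. t \<in> {0..b} \<Longrightarrow> \<bar>c t x\<bar> \<le> (1 + \<bar>t\<bar>) * (\<bar>Z x\<bar> + \<bar>r x\<bar>)"
  shows "continuous_on {0..b} (\<lambda>t. expectation (\<lambda>x. c t x * max (W t x) 0))"
proof (rule continuous_on_integral_dominated)
  show "continuous_on {0..b} (\<lambda>t. c t x * max (W t x) 0)" for x
    using assms(2) unfolding W_def by (intro continuous_intros)
  show "integrable M (\<lambda>x. 2 * (1 + \<bar>b\<bar>)\<^sup>2 * ((Z x)\<^sup>2 + (r x)\<^sup>2))"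
    using Z_square_integrable r_square_integrable by simp
  fix t x assume t: "t \<in> {0..b}"
  have "\<bar>c t x * max (W t x) 0\<bar> \<le> 2 * (1 + \<bar>t\<bar>)\<^sup>2 * ((Z x)\<^sup>2 + (r x)\<^sup>2)"
    using abs_mult_pos_part_affine_le[OF c[OF t]] by (simp add: W_def)
  also have "\<dots> \<le> 2 * (1 + \<bar>b\<bar>)\<^sup>2 * ((Z x)\<^sup>2 + (r x)\<^sup>2)"
    using t by (intro mult_right_mono mult_left_mono power_mono) auto
  finally show "\<bar>c t x * max (W t x) 0\<bar> \<le> 2 * (1 + \<bar>b\<bar>)\<^sup>2 * ((Z x)\<^sup>2 + (r x)\<^sup>2)" .
qed measurable

lemma continuous_on_kappa_of: "continuous_on {0..b} (kappa_of \<rho>)"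
proof -
  have pos_sq_moment: "continuous_on {0..b} pos_sq_moment"
    unfolding pos_sq_moment_def power2_eq_square
  proof (rule continuous_on_expectation_mult_pos_W)
    show "\<bar>max (W t x) 0\<bar> \<le> (1 + \<bar>t\<bar>) * (\<bar>Z x\<bar> + \<bar>r x\<bar>)" for t x
      unfolding W_def by (rule abs_pos_part_affine_le)
  qed (auto simp: W_def intro!: continuous_intros)
  have cross_moment: "continuous_on {0..b} cross_moment"
    unfolding cross_moment_def
    by (rule continuous_on_expectation_mult_pos_W) (auto simp: algebra_simps)
  have "kappa_of \<rho> = (\<lambda>u. sqrt (pos_sq_moment u)
      + \<rho> * (pos_sq_moment u - u * cross_moment u) / sqrt (pos_sq_moment u))"
    unfolding kappa_of_def delta_of_def using pos_sq_moment_eq by auto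
  moreover have "\<forall>u\<in>{0..b}. sqrt (pos_sq_moment u) \<noteq> 0"
    using pos_sq_moment_pos by fastforce
  ultimately show ?thesis
    using pos_sq_moment cross_moment by (auto intro!: continuous_intros)
qed

lemma kappa_of_0: "kappa_of \<rho> 0 = (1 + \<rho>) / sqrt 2"
  unfolding kappa_of_def delta_of_0 pos_prob_0 by (simp add: field_simps)

lemma kappa_of_unbounded:
  assumes "-1 \<le> \<rho>" "\<rho> \<le> 1"
  obtains U where "0 \<le> U" "K \<le> kappa_of \<rho> U"
proof
  define U where "U = (\<bar>K\<bar> + 1)\<^sup>2 / cross_moment 0"
  show "0 \<le> U" using cross_moment_0_pos by (simp add: U_def)
  have "(\<bar>K\<bar> + 1)\<^sup>2 \<le> pos_sq_moment U"
    using pos_sq_moment_ge[OF \<open>0 \<le> U\<close>] cross_moment_0_pos by (simp add: U_def)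
  then have "\<bar>K\<bar> + 1 \<le> delta_of U"
    unfolding delta_of_def using real_sqrt_le_mono by fastforce
  moreover have "\<bar>\<rho> * pos_prob U / delta_of U\<bar> \<le> 1"
  proof -
    have "\<bar>\<rho> * pos_prob U\<bar> \<le> 1"
      using assms pos_prob_less_1[of U] unfolding abs_mult
      by (intro mult_le_one) (auto simp: pos_prob_def)
    then show ?thesis
      using \<open>\<bar>K\<bar> + 1 \<le> delta_of U\<close> delta_of_pos[OF \<open>0 \<le> U\<close>]
      by (simp add: abs_divide divide_le_eq_1)
  qed
  ultimately show "K \<le> kappa_of \<rho> U"
    unfolding kappa_of_def by linarith
qed

lemma ex1_kappa_of_eq:
  assumes "-1 \<le> \<rho>" "\<rho> \<le> 1" "(1 + \<rho>) / sqrt 2 < \<kappa>"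
  shows "\<exists>!u. 0 < u \<and> kappa_of \<rho> u = \<kappa>"
proof -
  obtain U where "0 \<le> U" "\<kappa> \<le> kappa_of \<rho> U"
    using kappa_of_unbounded[OF assms(1,2)] .
  then obtain u where "0 \<le> u" "kappa_of \<rho> u = \<kappa>"
    using IVT'[of "kappa_of \<rho>" 0 \<kappa> U] continuous_on_kappa_of kappa_of_0 assms(3) by auto
  moreover have "u \<noteq> 0" using \<open>kappa_of \<rho> u = \<kappa>\<close> kappa_of_0 assms(3) by auto
  moreover have "v = u" if "0 < v" "kappa_of \<rho> v = \<kappa>" for v
    using kappa_of_strict_mono[of u v \<rho>] kappa_of_strict_mono[of v u \<rho>] that
      \<open>0 \<le> u\<close> \<open>kappa_of \<rho> u = \<kappa>\<close> assms(1,2)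
    by (cases v u rule: linorder_cases) auto
  ultimately show ?thesis by (metis order_le_neq_trans)
qed

lemma scaled_eq_W: "0 < \<sigma> \<Longrightarrow> \<sigma> * Z x + r x = \<sigma> * W (1 / \<sigma>) x"
  by (simp add: W_def field_simps)

lemma pos_part_scaled_eq:
  assumes "0 < \<sigma>"
  shows "max (\<sigma> * Z x + r x) 0 = \<sigma> * max (W (1 / \<sigma>) x) 0"
  using assms by (simp add: scaled_eq_W max_def mult_le_0_iff)

lemma fixed_point_system_iff:
  "(\<delta> > 1 / sqrt 2 \<and> \<sigma> > 0 \<and> 0 < \<gamma> \<and> \<gamma> < 1 \<and> \<kappa> = \<delta> + \<rho> * \<gamma> / \<delta> \<and>
      \<sigma>\<^sup>2 = (1 / \<delta>\<^sup>2) * expectation (\<lambda>x. (max (\<sigma> * Z x + r x) 0)\<^sup>2) \<and>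
      \<gamma> = prob {x \<in> space M. \<sigma> * Z x + r x > 0})
   \<longleftrightarrow> (0 < \<sigma> \<and> \<delta> = delta_of (1 / \<sigma>) \<and> \<gamma> = pos_prob (1 / \<sigma>) \<and> kappa_of \<rho> (1 / \<sigma>) = \<kappa>)"
proof (cases "0 < \<sigma>")
  case True
  let ?u = "1 / \<sigma>"
  have "0 < ?u" using True by simp
  have moment: "expectation (\<lambda>x. (max (\<sigma> * Z x + r x) 0)\<^sup>2) = \<sigma>\<^sup>2 * (delta_of ?u)\<^sup>2"
    using True \<open>0 < ?u\<close>
    by (simp add: pos_part_scaled_eq power_mult_distrib delta_of_sq pos_sq_moment_def)
  have prob: "prob {x \<in> space M. \<sigma> * Z x + r x > 0} = pos_prob ?u"
    using True unfolding pos_prob_def by (simp add: scaled_eq_W zero_less_mult_iff)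
  have "0 < delta_of ?u" "1 / sqrt 2 < delta_of ?u"
    using delta_of_pos delta_of_gt \<open>0 < ?u\<close> by auto
  moreover have "0 < pos_prob ?u" "pos_prob ?u < 1"
    using pos_prob_mono[of 0 ?u] pos_prob_0 pos_prob_less_1 \<open>0 < ?u\<close> by auto
  moreover have "\<sigma>\<^sup>2 = (1 / \<delta>\<^sup>2) * (\<sigma>\<^sup>2 * (delta_of ?u)\<^sup>2) \<longleftrightarrow> \<delta> = delta_of ?u"
    if "0 < \<delta>" for \<delta>
    using that True \<open>0 < delta_of ?u\<close> by (auto simp: field_simps power2_eq_iff_nonneg)
  moreover have "0 < 1 / sqrt (2 :: real)" by simp
  ultimately show ?thesis
    unfolding moment prob kappa_of_def using True by (metis less_trans)
qed simp

end

theorem lemma2: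
  fixes M :: "'a measure" and Z r :: "'a \<Rightarrow> real" and \<rho> \<kappa> :: real
  assumes "prob_space M"
    and "-1 \<le> \<rho>" and "\<rho> \<le> 1"
    and "\<kappa> > (1 + \<rho>) / sqrt 2"
    and "distributed M lborel Z (\<lambda>x. ennreal (std_normal_density x))"
    and "r \<in> borel_measurable M"
    and "prob_space.indep_var M borel Z borel r"
    and "AE x in M. r x \<ge> 0"
    and "integrable M (\<lambda>x. (r x)\<^sup>2)"
    and "distr M borel r \<noteq> return borel 0"
  shows "\<exists>!t :: real \<times> real \<times> real. (case t of (\<delta>, \<sigma>, \<gamma>) \<Rightarrow>
            \<delta> > 1 / sqrt 2 \<and> \<sigma> > 0 \<and> 0 < \<gamma> \<and> \<gamma> < 1 \<and>
            \<kappa> = \<delta> + \<rho> * \<gamma> / \<delta> \<and>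
            \<sigma>\<^sup>2 = (1 / \<delta>\<^sup>2) * (\<integral>x. (max (\<sigma> * Z x + r x) 0)\<^sup>2 \<partial>M) \<and>
            \<gamma> = measure M {x \<in> space M. \<sigma> * Z x + r x > 0})"
proof -
  interpret std_normal_indep_shift M Z r
    using assms by (intro std_normal_indep_shift.intro std_normal_indep_shift_axioms.intro) auto
  obtain u where u: "0 < u" "kappa_of \<rho> u = \<kappa>"
    and unique: "\<And>v. 0 < v \<Longrightarrow> kappa_of \<rho> v = \<kappa> \<Longrightarrow> v = u"
    using ex1_kappa_of_eq[OF assms(2-4)] by metis
  have "\<exists>!t :: real \<times> real \<times> real. case t of (\<delta>, \<sigma>, \<gamma>) \<Rightarrow>
      0 < \<sigma> \<and> \<delta> = delta_of (1 / \<sigma>) \<and> \<gamma> = pos_prob (1 / \<sigma>) \<and> kappa_of \<rho> (1 / \<sigma>) = \<kappa>"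
    (is "\<exists>!t. ?solution t")
  proof (rule ex1I[where a = "(delta_of u, 1 / u, pos_prob u)"])
    show "?solution (delta_of u, 1 / u, pos_prob u)" using u by simp
    show "t = (delta_of u, 1 / u, pos_prob u)" if "?solution t" for t
      using that unique[of "1 / fst (snd t)"] by (auto split: prod.splits)
  qed
  then show ?thesis by (simp only: fixed_point_system_iff)
qed

end
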